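(* Let $d\ge 3$ and $h\ge 1$. The exponent of the sandpile group $G(d,h)$ equals $$(d-1)^h\cdot \operatorname{lcm}\{\,d\,\theta(d,h+1),\ \theta(d,h),\ \theta(d,h-1),\ \dots,\ \theta(d,2)\,\},$$ where $\theta(d,n) := \frac{(d-1)^n-1}{d-2}$.
   Context: Let $\mathcal{T}(d,h)$ be the rooted tree in which the root $0$ has $d$ children, every vertex at distance $1,\dots,h-1$ from the root has $d-1$ children, and the vertices at distance $h$ (leaves) have no children (the ball of radius $h$ in the infinite $d$-regular tree). Let $V$ be its vertex set, $A$ its adjacency matrix, $\Delta := dI-A$, and $\Lambda\subset\mathbb{Z}^V$ the lattice spanned by the rows of $\Delta$. Then $G(d,h) := \mathbb{Z}^V/\Lambda$. The exponent of a finite abelian group is the least common multiple of the orders of its elements (equivalently the largest order of an element). *)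

theory Defs
  imports Main
begin

text \<open>Vertices of T(d,h) are encoded as paths from the root: the root is the empty
list, the children of the root are [i] with i < d, and the children of a
non-root vertex xs (with length xs < h) are xs @ [j] with j < d - 1.\<close>

definition tree_verts :: "nat \<Rightarrow> nat \<Rightarrow> nat list set" where
  "tree_verts d h = {xs. length xs \<le> h \<and>
      (\<forall>i < length xs. xs ! i < (if i = 0 then d else d - 1))}"

definition tree_adj :: "nat \<Rightarrow> nat \<Rightarrow> nat list \<Rightarrow> nat list \<Rightarrow> bool" where
  "tree_adj d h u v \<longleftrightarrow> u \<in> tree_verts d h \<and> v \<in> tree_verts d h \<and>
      ((\<exists>j. v = u @ [j]) \<or> (\<exists>j. u = v @ [j]))"

definition tree_Delta :: "nat \<Rightarrow> nat \<Rightarrow> nat list \<Rightarrow> nat list \<Rightarrow> int" where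
  "tree_Delta d h u v = (if u = v then int d else 0) - (if tree_adj d h u v then 1 else 0)"

definition ZV :: "nat \<Rightarrow> nat \<Rightarrow> (nat list \<Rightarrow> int) set" where
  "ZV d h = {x. \<forall>v. v \<notin> tree_verts d h \<longrightarrow> x v = 0}"

definition Lambda :: "nat \<Rightarrow> nat \<Rightarrow> (nat list \<Rightarrow> int) set" where
  "Lambda d h = {x. \<exists>c :: nat list \<Rightarrow> int.
      \<forall>v. x v = (\<Sum>u\<in>tree_verts d h. c u * tree_Delta d h u v)}"

definition sp_order :: "nat \<Rightarrow> nat \<Rightarrow> (nat list \<Rightarrow> int) \<Rightarrow> nat" where
  "sp_order d h x = (LEAST n. n > 0 \<and> (\<lambda>v. int n * x v) \<in> Lambda d h)"

definition sp_exponent :: "nat \<Rightarrow> nat \<Rightarrow> nat" where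
  "sp_exponent d h = Lcm (sp_order d h ` ZV d h)"

text \<open>theta(d,n) = ((d-1)^n - 1)/(d-2); the division is exact for d \<ge> 3.\<close>
definition theta :: "nat \<Rightarrow> nat \<Rightarrow> nat" where
  "theta d n = ((d - 1) ^ n - 1) div (d - 2)"

end

theory Submission
  imports Defs Complex_Main "HOL-Library.Sublist"
begin

text \<open>
Over the rationals \<Delta> has an explicit inverse. Index the vertices by their paths from the root,
write |v| for the depth and v \<sqinter> w for the longest common prefix, and put
T(l) = \<theta>(d, h + 1 - l). Then
  G(v, w) = T(|v|) T(|w|) \<rho>(|v \<sqinter> w|),
  \<rho>(0) = 1 / (d (d - 1)^h \<theta>(d, h + 1)),   \<rho>(k + 1) = \<rho>(k) + 1 / (T(k) T(k + 1))
satisfies G \<Delta> = I: the function l \<mapsto> T(l) is harmonic at the non-root vertices and vanishes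
one level below the leaves, and the increments of \<rho> compensate exactly for the defect along the
path from the root to v. As \<Delta> is symmetric, n annihilates G(d, h) iff n G is integral. The
T(l) are integers with T(h) = 1, and for d \<ge> 3 every k \<le> h is the depth of the common ancestor of
two leaves, so this happens iff n \<rho>(k) is an integer for all k \<le> h, i.e. iff n is divisible by
d (d - 1)^h \<theta>(d, h + 1) and by \<theta>(d, a + 1) \<theta>(d, a) for 1 \<le> a \<le> h. Consecutive \<theta>'s are
coprime, and every \<theta>(d, a) is coprime to d - 1; this turns these conditions into divisibility by
the stated number.
\<close>

fun repunit :: "nat \<Rightarrow> nat \<Rightarrow> nat" where
  "repunit q 0 = 0"
| "repunit q (Suc n) = q * repunit q n + 1"

lemma repunit_pos: "0 < n \<Longrightarrow> 0 < repunit q n"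
  by (cases n) simp_all

lemma repunit_Suc': "repunit q (Suc n) = repunit q n + q ^ n"
  by (induction n) (simp_all add: algebra_simps)

lemma pred_mult_repunit: "(q - 1) * repunit q n = q ^ n - 1"
proof (induction n)
  case (Suc n)
  have "(q - 1) * repunit q (Suc n) = (q ^ n - 1) + (q - 1) * q ^ n"
    by (simp only: repunit_Suc' add_mult_distrib2 Suc.IH)
  also have "\<dots> = q ^ Suc n - 1"
  proof (cases "q = 0")
    case False
    then have "q ^ n \<le> q * q ^ n" "1 \<le> q ^ n" by simp_all
    then show ?thesis by (simp add: diff_mult_distrib)
  qed (simp add: power_0_left)
  finally show ?case .
qed simp

lemma theta_eq_repunit:
  assumes "3 \<le> d" shows "theta d n = repunit (d - 1) n"
proof -
  have "(d - 1) ^ n - 1 = (d - 2) * repunit (d - 1) n"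
    using pred_mult_repunit[of "d - 1" n] by (simp add: numeral_2_eq_2)
  then show ?thesis using assms by (simp add: theta_def)
qed

lemma coprime_repunit_Suc: "coprime (repunit q n) (repunit q (Suc n))"
  by (metis repunit.simps(2) coprime_mult_left_iff coprime_add_one_right)

lemma coprime_power_repunit:
  assumes "0 < n" shows "coprime (q ^ k) (repunit q n)"
proof -
  obtain m where "n = Suc m" using assms gr0_implies_Suc by blast
  moreover have "coprime q (q * repunit q m + 1)"
    by (metis coprime_add_one_right coprime_mult_left_iff)
  ultimately show ?thesis by simp
qed

lemma coprime_mult_dvd_iff:
  fixes a b c :: nat
  shows "coprime a b \<Longrightarrow> a * b dvd c \<longleftrightarrow> a dvd c \<and> b dvd c"
  by (auto intro: divides_mult dest: dvd_mult_left dvd_mult_right)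

lemma mult_Lcm_insert_dvd_iff:
  fixes p b n :: nat
  assumes "\<And>a. a \<in> A \<Longrightarrow> coprime a p"
  shows "p * Lcm (insert b A) dvd n \<longleftrightarrow> p * b dvd n \<and> (\<forall>a\<in>A. a dvd n)"
proof
  assume "p * Lcm (insert b A) dvd n"
  moreover have "p * b dvd p * Lcm (insert b A)" "\<forall>a\<in>A. a dvd p * Lcm (insert b A)"
    by (simp_all add: dvd_Lcm)
  ultimately show "p * b dvd n \<and> (\<forall>a\<in>A. a dvd n)"
    using dvd_trans by blast
next
  assume dvd: "p * b dvd n \<and> (\<forall>a\<in>A. a dvd n)"
  then obtain m where m: "n = p * m"
    by (meson dvd_mult_left dvdE)
  show "p * Lcm (insert b A) dvd n"
  proof (cases "p = 0")
    case False
    have "Lcm (insert b A) dvd m"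
    proof (rule Lcm_least)
      fix a assume "a \<in> insert b A"
      then show "a dvd m"
      proof
        assume "a \<in> A"
        then show ?thesis using dvd m assms coprime_dvd_mult_right_iff by metis
      qed (use dvd m False in simp)
    qed
    then show ?thesis using m by simp
  qed (use m in simp)
qed

lemma Ints_upto_iff_Ints_diff:
  fixes f :: "nat \<Rightarrow> 'a :: ring_1"
  shows "(\<forall>k\<le>h. f k \<in> \<int>) \<longleftrightarrow> f 0 \<in> \<int> \<and> (\<forall>k<h. f (Suc k) - f k \<in> \<int>)"
proof (induction h)
  case (Suc h)
  have "f (Suc h) \<in> \<int> \<longleftrightarrow> f (Suc h) - f h \<in> \<int>" if "f h \<in> \<int>"
    using that Ints_diff Ints_add by (metis diff_add_cancel)
  then show ?case
    using Suc by (auto simp: le_Suc_eq less_Suc_eq)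
qed simp

section \<open>Lattices with a rational inverse\<close>

definition row_lattice :: "'a set \<Rightarrow> ('a \<Rightarrow> 'a \<Rightarrow> int) \<Rightarrow> ('a \<Rightarrow> int) set" where
  "row_lattice V M = {x. \<exists>c. \<forall>v. x v = (\<Sum>u\<in>V. c u * M u v)}"

lemma row_lattice_scale:
  assumes "x \<in> row_lattice V M" shows "(\<lambda>v. k * x v) \<in> row_lattice V M"
proof -
  obtain c where "\<forall>v. x v = (\<Sum>u\<in>V. c u * M u v)"
    using assms unfolding row_lattice_def by blast
  then have "\<forall>v. k * x v = (\<Sum>u\<in>V. (k * c u) * M u v)"
    by (simp add: sum_distrib_left mult.assoc)
  then show ?thesis unfolding row_lattice_def mem_Collect_eq by (rule exI[of _ "\<lambda>u. k * c u"])
qed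

lemma row_lattice_diff:
  assumes "x \<in> row_lattice V M" "y \<in> row_lattice V M"
  shows "(\<lambda>v. x v - y v) \<in> row_lattice V M"
proof -
  obtain b c where "\<forall>v. x v = (\<Sum>u\<in>V. b u * M u v)" "\<forall>v. y v = (\<Sum>u\<in>V. c u * M u v)"
    using assms unfolding row_lattice_def by blast
  then have "\<forall>v. x v - y v = (\<Sum>u\<in>V. (b u - c u) * M u v)"
    by (simp add: sum_subtractf left_diff_distrib)
  then show ?thesis unfolding row_lattice_def mem_Collect_eq by (rule exI[of _ "\<lambda>u. b u - c u"])
qed

context
  fixes V :: "'a set" and M :: "'a \<Rightarrow> 'a \<Rightarrow> int" and G :: "'a \<Rightarrow> 'a \<Rightarrow> 'b :: field_char_0"
  assumes finite_V: "finite V"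
    and inverse: "\<And>v w. v \<in> V \<Longrightarrow> (\<Sum>u\<in>V. G v u * of_int (M u w)) = (if v = w then 1 else 0)"
begin

lemma row_lattice_if_inverse_Ints:
  assumes integral: "\<forall>v\<in>V. \<forall>w\<in>V. of_nat n * G v w \<in> \<int>"
    and supp: "\<And>v. v \<notin> V \<Longrightarrow> x v = 0"
  shows "(\<lambda>v. int n * x v) \<in> row_lattice V M"
proof -
  define C where "C v u = (SOME z. of_nat n * G v u = of_int z)" for v u
  have C: "of_int (C v u) = of_nat n * G v u" if "v \<in> V" "u \<in> V" for v u
    using integral that unfolding C_def by (metis (mono_tags, lifting) Ints_cases someI_ex)
  define c where "c u = (\<Sum>v\<in>V. x v * C v u)" for u
  have "int n * x w = (\<Sum>u\<in>V. c u * M u w)" for w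
  proof -
    have "(of_int (\<Sum>u\<in>V. c u * M u w) :: 'b)
        = (\<Sum>v\<in>V. \<Sum>u\<in>V. of_int (x v) * (of_int (C v u) * of_int (M u w)))"
      unfolding c_def of_int_sum of_int_mult sum_distrib_right mult.assoc by (rule sum.swap)
    also have "\<dots> = (\<Sum>v\<in>V. of_int (x v) * of_nat n * (\<Sum>u\<in>V. G v u * of_int (M u w)))"
      unfolding sum_distrib_left by (intro sum.cong refl) (simp add: C)
    also have "\<dots> = (\<Sum>v\<in>V. if v = w then of_int (x w) * of_nat n else 0)"
      by (rule sum.cong) (simp_all add: inverse)
    also have "\<dots> = of_int (int n * x w)"
      using finite_V supp by simp
    finally show ?thesis by (metis of_int_eq_iff)
  qed
  then show ?thesis unfolding row_lattice_def by blast
qed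

lemma inverse_Ints_if_row_lattice:
  assumes sym: "\<And>u w. M u w = M w u"
    and v: "v \<in> V" and w: "w \<in> V"
    and lattice: "(\<lambda>u. if u = w then int n else 0) \<in> row_lattice V M"
  shows "of_nat n * G v w \<in> \<int>"
proof -
  obtain c where c: "\<And>u. (if u = w then int n else 0) = (\<Sum>t\<in>V. c t * M t u)"
    using lattice unfolding row_lattice_def by blast
  have "of_nat n * G v w = (\<Sum>u\<in>V. G v u * of_int (if u = w then int n else 0))"
    using finite_V w by (simp add: if_distrib cong: if_cong)
  also have "\<dots> = (\<Sum>u\<in>V. \<Sum>t\<in>V. of_int (c t) * (G v u * of_int (M t u)))"
    unfolding c of_int_sum of_int_mult sum_distrib_left by (simp add: ac_simps)
  also have "\<dots> = (\<Sum>t\<in>V. of_int (c t) * (\<Sum>u\<in>V. G v u * of_int (M t u)))"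
    by (subst sum.swap) (simp add: sum_distrib_left)
  also have "\<dots> = (\<Sum>t\<in>V. of_int (c t) * (if v = t then 1 else 0))"
    using inverse[OF v] by (simp add: sym)
  also have "\<dots> = of_int (c v)"
    using finite_V v by (simp add: if_distrib cong: if_cong)
  finally show ?thesis by simp
qed

lemma row_lattice_multiples_iff_inverse_Ints:
  assumes "\<And>u w. M u w = M w u"
  shows "(\<forall>x. (\<forall>v. v \<notin> V \<longrightarrow> x v = 0) \<longrightarrow> (\<lambda>v. int n * x v) \<in> row_lattice V M) \<longleftrightarrow>
      (\<forall>v\<in>V. \<forall>w\<in>V. of_nat n * G v w \<in> \<int>)"
    (is "?multiples \<longleftrightarrow> _")
proof
  assume ?multiples
  show "\<forall>v\<in>V. \<forall>w\<in>V. of_nat n * G v w \<in> \<int>"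
  proof (intro ballI)
    fix v w assume "v \<in> V" "w \<in> V"
    have "(\<lambda>u. int n * (if u = w then 1 else 0)) \<in> row_lattice V M"
      using \<open>?multiples\<close> \<open>w \<in> V\<close> by auto
    then have "(\<lambda>u. if u = w then int n else 0) \<in> row_lattice V M"
      by (simp add: if_distrib cong: if_cong)
    with \<open>v \<in> V\<close> \<open>w \<in> V\<close> show "of_nat n * G v w \<in> \<int>"
      by (rule inverse_Ints_if_row_lattice[OF assms])
  qed
qed (auto intro: row_lattice_if_inverse_Ints)

end

lemma Lambda_eq_row_lattice: "Lambda d h = row_lattice (tree_verts d h) (tree_Delta d h)"
  unfolding Lambda_def row_lattice_def ..

lemma sp_order_LeastI:
  assumes "0 < m" "(\<lambda>v. int m * x v) \<in> Lambda d h"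
  shows "0 < sp_order d h x" "(\<lambda>v. int (sp_order d h x) * x v) \<in> Lambda d h"
  using LeastI[of "\<lambda>n. 0 < n \<and> (\<lambda>v. int n * x v) \<in> Lambda d h" m] assms
  unfolding sp_order_def by auto

lemma sp_order_dvd:
  assumes m: "(\<lambda>v. int m * x v) \<in> Lambda d h"
  shows "sp_order d h x dvd m"
proof (cases "m = 0")
  case False
  let ?o = "sp_order d h x"
  have o: "0 < ?o" "(\<lambda>v. int ?o * x v) \<in> Lambda d h"
    using sp_order_LeastI False m by auto
  have "(\<lambda>v. int m * x v - int (m div ?o) * (int ?o * x v)) \<in> Lambda d h"
    using m o(2) by (simp add: Lambda_eq_row_lattice row_lattice_diff row_lattice_scale)
  moreover have "int m * x v - int (m div ?o) * (int ?o * x v) = int (m mod ?o) * x v" for v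
  proof -
    have "int m = int (m div ?o) * int ?o + int (m mod ?o)"
      by (metis of_nat_add of_nat_mult div_mult_mod_eq)
    then show ?thesis by (simp add: algebra_simps)
  qed
  ultimately have "(\<lambda>v. int (m mod ?o) * x v) \<in> Lambda d h"
    by simp
  moreover have "\<not> (0 < m mod ?o \<and> (\<lambda>v. int (m mod ?o) * x v) \<in> Lambda d h)"
    using o(1) unfolding sp_order_def by (intro not_less_Least) simp
  ultimately have "m mod ?o = 0"
    by simp
  then show ?thesis by (simp add: dvd_eq_mod_eq_0)
qed simp

lemma sp_exponent_dvd_iff:
  assumes "0 < N" "\<forall>x\<in>ZV d h. (\<lambda>v. int N * x v) \<in> Lambda d h"
  shows "sp_exponent d h dvd n \<longleftrightarrow> (\<forall>x\<in>ZV d h. (\<lambda>v. int n * x v) \<in> Lambda d h)"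
proof
  assume "sp_exponent d h dvd n"
  show "\<forall>x\<in>ZV d h. (\<lambda>v. int n * x v) \<in> Lambda d h"
  proof
    fix x assume x: "x \<in> ZV d h"
    have "sp_order d h x dvd sp_exponent d h"
      unfolding sp_exponent_def using x by (simp add: dvd_Lcm)
    then have "sp_order d h x dvd n"
      using \<open>sp_exponent d h dvd n\<close> by (rule dvd_trans)
    then obtain k where k: "n = sp_order d h x * k" ..
    have "(\<lambda>v. int (sp_order d h x) * x v) \<in> Lambda d h"
      using sp_order_LeastI assms x by blast
    then have "(\<lambda>v. int k * (int (sp_order d h x) * x v)) \<in> Lambda d h"
      unfolding Lambda_eq_row_lattice by (rule row_lattice_scale)
    then show "(\<lambda>v. int n * x v) \<in> Lambda d h"
      using k by (simp add: ac_simps)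
  qed
qed (auto simp: sp_exponent_def intro!: Lcm_least sp_order_dvd)

section \<open>The ball in the regular tree\<close>

definition branching :: "nat \<Rightarrow> nat list \<Rightarrow> nat" where
  "branching d w = (if w = [] then d else d - 1)"

lemma snoc_in_tree_verts:
  "w @ [j] \<in> tree_verts d h \<longleftrightarrow> w \<in> tree_verts d h \<and> length w < h \<and> j < branching d w"
  unfolding tree_verts_def branching_def
  by (auto simp: nth_append less_Suc_eq all_conj_distrib)

lemma prefix_in_tree_verts:
  assumes "prefix w v" "v \<in> tree_verts d h" shows "w \<in> tree_verts d h"
proof -
  have "w = take (length w) v"
    using assms(1) by (metis append_eq_conv_conj prefix_def)
  moreover have "take n v \<in> tree_verts d h" for n
    using assms(2) unfolding tree_verts_def by auto
  ultimately show ?thesis by metis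
qed

lemma length_le_if_in_tree_verts: "v \<in> tree_verts d h \<Longrightarrow> length v \<le> h"
  unfolding tree_verts_def by simp

lemma finite_tree_verts: "finite (tree_verts d h)"
proof (rule finite_subset)
  show "tree_verts d h \<subseteq> {xs. set xs \<subseteq> {..<d} \<and> length xs \<le> h}"
    unfolding tree_verts_def by (force simp: in_set_conv_nth split: if_splits)
qed (simp add: finite_lists_length_le)

lemma tree_Delta_sym: "tree_Delta d h u w = tree_Delta d h w u"
  unfolding tree_Delta_def tree_adj_def by auto

lemma tree_neighbours:
  assumes w: "w \<in> tree_verts d h"
  shows "{u \<in> tree_verts d h. tree_adj d h u w} =
    (if w = [] then {} else {butlast w}) \<union> ((\<lambda>j. w @ [j]) ` {..<branching d w} \<inter> tree_verts d h)"
    (is "?N = ?P \<union> ?C")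
proof (intro set_eqI iffI)
  fix u assume "u \<in> ?N"
  then have "u \<in> tree_verts d h" "(\<exists>j. w = u @ [j]) \<or> (\<exists>j. u = w @ [j])"
    unfolding tree_adj_def by auto
  then show "u \<in> ?P \<union> ?C"
    using snoc_in_tree_verts by fastforce
next
  fix u assume "u \<in> ?P \<union> ?C"
  then consider "w \<noteq> []" "u = butlast w" | j where "u = w @ [j]" "u \<in> tree_verts d h"
    by (auto split: if_splits)
  then show "u \<in> ?N"
  proof cases
    case 1
    then have "w = u @ [last w]" by simp
    moreover have "u \<in> tree_verts d h"
      using 1 w prefix_in_tree_verts prefixeq_butlast by blast
    ultimately show ?thesis using w unfolding tree_adj_def by blast
  qed (use w in \<open>auto simp: tree_adj_def\<close>)
qed

lemma sum_tree_Delta: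
  fixes f :: "nat list \<Rightarrow> 'a :: comm_ring_1"
  assumes w: "w \<in> tree_verts d h" and below: "\<And>u. length u = Suc h \<Longrightarrow> f u = 0"
  shows "(\<Sum>u\<in>tree_verts d h. f u * of_int (tree_Delta d h u w)) =
    of_nat d * f w - (if w = [] then 0 else f (butlast w)) - (\<Sum>j<branching d w. f (w @ [j]))"
proof -
  let ?V = "tree_verts d h" and ?C = "(\<lambda>j. w @ [j]) ` {..<branching d w}"
  have "(\<Sum>u\<in>?V. f u * of_int (tree_Delta d h u w))
      = (\<Sum>u\<in>?V. if u = w then of_nat d * f u else 0) - (\<Sum>u\<in>?V. if tree_adj d h u w then f u else 0)"
    unfolding sum_subtractf[symmetric] tree_Delta_def
    by (intro sum.cong refl) (auto simp: tree_adj_def)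
  also have "(\<Sum>u\<in>?V. if u = w then of_nat d * f u else 0) = of_nat d * f w"
    using w finite_tree_verts by simp
  also have "(\<Sum>u\<in>?V. if tree_adj d h u w then f u else 0) = (\<Sum>u\<in>{u \<in> ?V. tree_adj d h u w}. f u)"
    using finite_tree_verts by (simp add: sum.inter_filter)
  also have "\<dots> = (if w = [] then 0 else f (butlast w)) + (\<Sum>u\<in>?C \<inter> ?V. f u)"
    unfolding tree_neighbours[OF w] using finite_tree_verts
    by (subst sum.union_disjoint) (auto dest: arg_cong[of _ _ length])
  also have "(\<Sum>u\<in>?C \<inter> ?V. f u) = (\<Sum>u\<in>?C. f u)"
  proof (rule sum.mono_neutral_left)
    show "\<forall>u\<in>?C - ?C \<inter> ?V. f u = 0"
      using w below length_le_if_in_tree_verts by (force simp: snoc_in_tree_verts)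
  qed auto
  also have "\<dots> = (\<Sum>j<branching d w. f (w @ [j]))"
    by (simp add: sum.reindex inj_on_def)
  finally show ?thesis by (simp add: algebra_simps)
qed

lemma sum_tree_Delta_outside:
  "w \<notin> tree_verts d h \<Longrightarrow> (\<Sum>u\<in>tree_verts d h. f u * of_int (tree_Delta d h u w)) = 0"
  by (rule sum.neutral) (auto simp: tree_Delta_def tree_adj_def)

lemma longest_common_prefix_eq_prefix: "prefix w v \<Longrightarrow> longest_common_prefix v w = w"
  by (metis longest_common_prefix_max_prefix longest_common_prefix_prefix2 prefix_order.antisym prefix_order.refl)

lemma longest_common_prefix_snoc:
  "longest_common_prefix v (w @ [j]) =
    (if prefix (w @ [j]) v then w @ [j] else longest_common_prefix v w)"
proof (induction w arbitrary: v)
  case Nil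
  then show ?case by (cases v) auto
next
  case (Cons a w)
  then show ?case by (cases v) auto
qed

lemma longest_common_prefix_append:
  "longest_common_prefix (xs @ ys) (xs @ zs) = xs @ longest_common_prefix ys zs"
  by (induction xs) auto

section \<open>The inverse of \<Delta>\<close>

locale tree_ball =
  fixes d h :: nat
  assumes two_le_d: "2 \<le> d"
begin

definition T :: "nat \<Rightarrow> rat" where
  "T l = of_nat (repunit (d - 1) (h + 1 - l))"

fun rho :: "nat \<Rightarrow> rat" where
  "rho 0 = 1 / (of_nat d * of_nat (d - 1) ^ h * T 0)"
| "rho (Suc k) = rho k + 1 / (T k * T (Suc k))"

definition G :: "nat list \<Rightarrow> nat list \<Rightarrow> rat" where
  "G v w = T (length v) * T (length w) * rho (length (longest_common_prefix v w))"

lemma T_pos: "l \<le> h \<Longrightarrow> 0 < T l"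
  unfolding T_def by (simp add: repunit_pos)

lemma T_Suc_h: "T (Suc h) = 0"
  unfolding T_def by simp

lemma T_h: "T h = 1"
  unfolding T_def by simp

lemma T_rec: "l \<le> h \<Longrightarrow> T l = of_nat (d - 1) * T (Suc l) + 1"
  unfolding T_def by (simp add: Suc_diff_le)

lemma T_harmonic:
  assumes "0 < l" "l \<le> h"
  shows "of_nat d * T l = T (l - 1) + of_nat (d - 1) * T (Suc l)"
proof -
  have "of_nat d * T l = of_nat (d - 1) * T l + T l"
    using two_le_d by (simp add: of_nat_diff algebra_simps)
  moreover have "T (l - 1) = of_nat (d - 1) * T l + 1"
    using T_rec[of "l - 1"] assms by simp
  ultimately show ?thesis
    using T_rec[of l] assms(2) by linarith
qed

lemma rho_0: "of_nat d * (T 0 - T 1) * rho 0 = 1 / T 0"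
proof -
  have "T 0 - T 1 = of_nat (d - 1) ^ h"
    unfolding T_def by (simp del: repunit.simps(2) add: repunit_Suc')
  moreover have "of_nat (d - 1) ^ h \<noteq> (0 :: rat)" "of_nat d \<noteq> (0 :: rat)" "T 0 \<noteq> 0"
    using two_le_d T_pos[of 0] by auto
  ultimately show ?thesis by simp
qed

lemma rho_Suc_diff: "k < h \<Longrightarrow> T k * T (Suc k) * (rho (Suc k) - rho k) = 1"
  using T_pos[of k] T_pos[of "Suc k"] by simp

lemma G_below_leaves: "length u = Suc h \<Longrightarrow> G v u = 0"
  unfolding G_def by (simp add: T_Suc_h)

text \<open>For a vertex w of depth l on the path from the root to v, the left-hand side is
(\<Delta> G v)(w) / T(|v|), where e = 0 if w = v and e = 1 otherwise.\<close>

lemma rho_balance: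
  assumes "l \<le> h" and "e = 0 \<or> l < h"
  shows "of_nat d * T l * rho l - (if l = 0 then 0 else T (l - 1) * rho (l - 1))
      - T (Suc l) * (of_nat (if l = 0 then d else d - 1) * rho l + e * (rho (Suc l) - rho l))
    = (1 - e) / T l"
proof -
  have Tl: "T l \<noteq> 0" using T_pos[OF assms(1)] by simp
  have step: "e * (T (Suc l) * (rho (Suc l) - rho l)) = e / T l"
    using assms(2) rho_Suc_diff[of l] Tl by (auto simp: field_simps simp del: rho.simps)
  show ?thesis
  proof (cases l)
    case 0
    then show ?thesis
      using rho_0 step by (simp add: algebra_simps diff_divide_distrib del: rho.simps)
  next
    case (Suc k)
    have "of_nat d * T l = T k + of_nat (d - 1) * T (Suc l)"
      using T_harmonic[of l] assms(1) Suc by simp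
    moreover have "T k * (rho l - rho k) = 1 / T l"
      using rho_Suc_diff[of k] assms(1) Suc Tl by (simp add: field_simps del: rho.simps)
    ultimately show ?thesis
      using step Suc by (simp add: algebra_simps diff_divide_distrib del: rho.simps)
  qed
qed

lemma sum_children_rho:
  assumes w: "prefix w v" and v: "v \<in> tree_verts d h"
  shows "(\<Sum>j<branching d w. rho (length (longest_common_prefix v (w @ [j])))) =
    of_nat (branching d w) * rho (length w) +
    of_bool (v \<noteq> w) * (rho (Suc (length w)) - rho (length w))"
proof -
  let ?l = "length w" and ?i = "v ! length w"
  have on_path: "prefix (w @ [j]) v \<longleftrightarrow> v \<noteq> w \<and> j = ?i" for j
  proof -
    obtain z where "v = w @ z" using w prefixE by blast
    then show ?thesis by (cases z) auto
  qed
  have "rho (length (longest_common_prefix v (w @ [j]))) =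
      rho ?l + (if j = ?i then of_bool (v \<noteq> w) * (rho (Suc ?l) - rho ?l) else 0)" for j
    using longest_common_prefix_snoc[of v w j] longest_common_prefix_eq_prefix[OF w] on_path
    by auto
  moreover have "?i < branching d w" if "v \<noteq> w"
    using on_path[of ?i] that v prefix_in_tree_verts snoc_in_tree_verts by blast
  ultimately show ?thesis
    by (auto simp: sum.distrib)
qed

lemma G_Laplacian_off_path:
  assumes w: "w \<in> tree_verts d h" and off: "\<not> prefix w v"
  shows "of_nat d * G v w - (if w = [] then 0 else G v (butlast w))
      - (\<Sum>j<branching d w. G v (w @ [j])) = 0"
proof -
  obtain w' a where w': "w = w' @ [a]"
    using off by (cases w rule: rev_cases) auto
  let ?k = "length (longest_common_prefix v w)"
  have parent: "longest_common_prefix v w' = longest_common_prefix v w"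
    using longest_common_prefix_snoc[of v w' a] off w' by simp
  have child: "longest_common_prefix v (w @ [j]) = longest_common_prefix v w" for j
    using longest_common_prefix_snoc[of v w j] off append_prefixD by auto
  have "butlast w = w'" "w \<noteq> []"
    using w' by simp_all
  then have "of_nat d * G v w - (if w = [] then 0 else G v (butlast w))
      - (\<Sum>j<branching d w. G v (w @ [j])) =
    T (length v) * rho ?k *
      (of_nat d * T (length w) - T (length w') - of_nat (d - 1) * T (Suc (length w)))"
    unfolding G_def child by (simp add: branching_def algebra_simps parent)
  also have "\<dots> = 0"
    using T_harmonic[of "length w"] w' length_le_if_in_tree_verts[OF w] by simp
  finally show ?thesis .
qed

lemma G_Laplacian_on_path:
  assumes v: "v \<in> tree_verts d h" and on: "prefix w v"
  shows "of_nat d * G v w - (if w = [] then 0 else G v (butlast w))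
      - (\<Sum>j<branching d w. G v (w @ [j])) = (if v = w then 1 else 0)"
proof -
  let ?l = "length w" and ?m = "length v"
  define e :: rat where "e = of_bool (v \<noteq> w)"
  have "?l \<le> ?m" "?m \<le> h"
    using on prefix_length_le length_le_if_in_tree_verts[OF v] by auto
  moreover have "?l < ?m" if "v \<noteq> w"
    using on that prefix_length_less by (metis prefix_order.dual_order.not_eq_order_implies_strict)
  ultimately have e: "e = 0 \<or> ?l < h"
    unfolding e_def by (cases "v = w") auto
  have parent: "longest_common_prefix v (butlast w) = butlast w"
    using on prefixeq_butlast prefix_order.trans longest_common_prefix_eq_prefix by blast
  have children: "(\<Sum>j<branching d w. G v (w @ [j])) =
      T ?m * T (Suc ?l) * (of_nat (branching d w) * rho ?l + e * (rho (Suc ?l) - rho ?l))"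
    unfolding G_def e_def sum_children_rho[OF on v, symmetric] by (simp add: sum_distrib_left)
  have "of_nat d * G v w - (if w = [] then 0 else G v (butlast w))
      - (\<Sum>j<branching d w. G v (w @ [j])) =
    T ?m * (of_nat d * T ?l * rho ?l - (if ?l = 0 then 0 else T (?l - 1) * rho (?l - 1))
      - T (Suc ?l) * (of_nat (if ?l = 0 then d else d - 1) * rho ?l + e * (rho (Suc ?l) - rho ?l)))"
    unfolding children unfolding G_def parent longest_common_prefix_eq_prefix[OF on]
    by (simp add: branching_def algebra_simps del: rho.simps)
  also have "\<dots> = T ?m * ((1 - e) / T ?l)"
    using \<open>?l \<le> ?m\<close> \<open>?m \<le> h\<close> by (subst rho_balance[OF _ e]) simp_all
  also have "\<dots> = (if v = w then 1 else 0)"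
    using T_pos[of ?l] \<open>?l \<le> ?m\<close> \<open>?m \<le> h\<close> unfolding e_def by auto
  finally show ?thesis .
qed

lemma G_inverse:
  assumes v: "v \<in> tree_verts d h"
  shows "(\<Sum>u\<in>tree_verts d h. G v u * of_int (tree_Delta d h u w)) = (if v = w then 1 else 0)"
proof (cases "w \<in> tree_verts d h")
  case True
  have "(\<Sum>u\<in>tree_verts d h. G v u * of_int (tree_Delta d h u w)) =
      of_nat d * G v w - (if w = [] then 0 else G v (butlast w)) - (\<Sum>j<branching d w. G v (w @ [j]))"
    using True G_below_leaves by (rule sum_tree_Delta)
  also have "\<dots> = (if v = w then 1 else 0)"
    using G_Laplacian_on_path[OF v] G_Laplacian_off_path[OF True] by (cases "prefix w v") auto
  finally show ?thesis .
next
  case False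
  then show ?thesis
    using v sum_tree_Delta_outside by auto
qed

lemma G_Ints_iff_rho_Ints:
  assumes "3 \<le> d"
  shows "(\<forall>v\<in>tree_verts d h. \<forall>w\<in>tree_verts d h. of_nat n * G v w \<in> \<int>) \<longleftrightarrow>
    (\<forall>k\<le>h. of_nat n * rho k \<in> \<int>)"
proof
  assume rho: "\<forall>k\<le>h. of_nat n * rho k \<in> \<int>"
  show "\<forall>v\<in>tree_verts d h. \<forall>w\<in>tree_verts d h. of_nat n * G v w \<in> \<int>"
  proof (intro ballI)
    fix v w assume v: "v \<in> tree_verts d h"
    let ?k = "length (longest_common_prefix v w)"
    have "?k \<le> h"
      using prefix_length_le[OF longest_common_prefix_prefix1] length_le_if_in_tree_verts[OF v]
      by (rule le_trans)
    moreover have "T (length v) \<in> \<int>" "T (length w) \<in> \<int>"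
      by (simp_all add: T_def)
    ultimately have "T (length v) * T (length w) * (of_nat n * rho ?k) \<in> \<int>"
      using rho by (metis Ints_mult)
    then show "of_nat n * G v w \<in> \<int>"
      by (simp add: G_def ac_simps)
  qed
next
  assume G: "\<forall>v\<in>tree_verts d h. \<forall>w\<in>tree_verts d h. of_nat n * G v w \<in> \<int>"
  show "\<forall>k\<le>h. of_nat n * rho k \<in> \<int>"
  proof (intro allI impI)
    fix k assume "k \<le> h"
    \<comment> \<open>leaves meeting at depth k; y uses the child 1 of a non-root vertex, hence d \<ge> 3\<close>
    define x where "x = replicate k 0 @ replicate (h - k) (0 :: nat)"
    define y where "y = replicate k 0 @ replicate (h - k) (1 :: nat)"
    have "longest_common_prefix x y = replicate k 0"
      unfolding x_def y_def longest_common_prefix_append by (cases "h - k") auto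
    then have "G x y = rho k"
      using \<open>k \<le> h\<close> by (simp add: G_def x_def y_def T_h del: rho.simps)
    moreover have "x \<in> tree_verts d h" "y \<in> tree_verts d h"
      using \<open>k \<le> h\<close> assms unfolding x_def y_def tree_verts_def by (auto simp: nth_append)
    ultimately show "of_nat n * rho k \<in> \<int>"
      using G by metis
  qed
qed

lemma rho_Ints_iff:
  "(\<forall>k\<le>h. of_nat n * rho k \<in> \<int>) \<longleftrightarrow>
    d * (d - 1) ^ h * repunit (d - 1) (Suc h) dvd n \<and>
    (\<forall>a\<in>{1..h}. repunit (d - 1) (Suc a) * repunit (d - 1) a dvd n)"
proof -
  let ?R = "repunit (d - 1)"
  have Ints_iff_dvd: "of_nat n / of_nat m \<in> (\<int> :: rat set) \<longleftrightarrow> m dvd n" if "0 < m" for m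
    using that of_int_div_of_int_in_Ints_iff[of "int n" "int m", where 'a = rat] by simp
  have root: "of_nat n * rho 0 \<in> \<int> \<longleftrightarrow> d * (d - 1) ^ h * ?R (Suc h) dvd n"
  proof -
    have "of_nat n * rho 0 = of_nat n / of_nat (d * (d - 1) ^ h * ?R (Suc h))"
      by (simp add: T_def del: repunit.simps)
    moreover have "0 < d * (d - 1) ^ h * ?R (Suc h)"
      using two_le_d by (simp add: repunit_pos)
    ultimately show ?thesis by (simp only: Ints_iff_dvd)
  qed
  have step: "of_nat n * rho (Suc k) - of_nat n * rho k \<in> \<int> \<longleftrightarrow>
      ?R (Suc (h - k)) * ?R (h - k) dvd n" if "k < h" for k
  proof -
    have "of_nat n * rho (Suc k) - of_nat n * rho k =
        of_nat n / of_nat (?R (Suc (h - k)) * ?R (h - k))"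
      using that by (simp add: T_def Suc_diff_le distrib_left del: repunit.simps)
    moreover have "0 < ?R (Suc (h - k)) * ?R (h - k)"
      using that by (simp add: repunit_pos)
    ultimately show ?thesis by (simp only: Ints_iff_dvd)
  qed
  have reindex: "(\<forall>k<h. P (h - k)) \<longleftrightarrow> (\<forall>a\<in>{1..h}. P a)" for P
  proof safe
    fix a assume P: "\<forall>k<h. P (h - k)" and a: "a \<in> {1..h}"
    then have "h - a < h" "h - (h - a) = a" by auto
    then show "P a" using P by metis
  qed auto
  have "(\<forall>k<h. of_nat n * rho (Suc k) - of_nat n * rho k \<in> \<int>) \<longleftrightarrow>
      (\<forall>k<h. ?R (Suc (h - k)) * ?R (h - k) dvd n)"
    using step by blast
  also have "\<dots> \<longleftrightarrow> (\<forall>a\<in>{1..h}. ?R (Suc a) * ?R a dvd n)"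
    by (rule reindex)
  finally show ?thesis
    unfolding Ints_upto_iff_Ints_diff root by blast
qed

lemma rho_Ints_iff_dvd:
  "(\<forall>k\<le>h. of_nat n * rho k \<in> \<int>) \<longleftrightarrow>
    (d - 1) ^ h * Lcm (insert (d * repunit (d - 1) (Suc h)) (repunit (d - 1) ` {2..h})) dvd n"
proof -
  let ?R = "repunit (d - 1)"
  have pairs: "(\<forall>a\<in>{1..h}. ?R (Suc a) * ?R a dvd n) \<longleftrightarrow> (\<forall>a\<in>{1..Suc h}. ?R a dvd n)"
  proof -
    have "?R (Suc a) * ?R a dvd n \<longleftrightarrow> ?R (Suc a) dvd n \<and> ?R a dvd n" for a
      using coprime_repunit_Suc coprime_commute coprime_mult_dvd_iff by metis
    moreover have "?R a dvd n" if "\<forall>a\<in>{1..h}. ?R (Suc a) dvd n" "a \<in> {1..Suc h}" for a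
    proof (cases "a = 1")
      case False
      then have "a - 1 \<in> {1..h}" "Suc (a - 1) = a"
        using that(2) by auto
      then show ?thesis using that(1) by metis
    qed simp
    ultimately show ?thesis by (auto simp del: repunit.simps)
  qed
  have "{1..Suc h} = insert 1 (insert (Suc h) {2..h})" "?R (Suc 0) = 1"
    by auto
  then have "(\<forall>k\<le>h. of_nat n * rho k \<in> \<int>) \<longleftrightarrow>
      (d - 1) ^ h * (d * ?R (Suc h)) dvd n \<and> (\<forall>a\<in>?R ` {2..h}. a dvd n)"
    unfolding rho_Ints_iff pairs by (auto simp: ac_simps simp del: repunit.simps dest: dvd_mult_left)
  also have "\<dots> \<longleftrightarrow> (d - 1) ^ h * Lcm (insert (d * ?R (Suc h)) (?R ` {2..h})) dvd n"
  proof (rule mult_Lcm_insert_dvd_iff[symmetric])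
    fix a assume "a \<in> ?R ` {2..h}"
    then obtain b where "b \<in> {2..h}" "a = ?R b" by blast
    then show "coprime a ((d - 1) ^ h)"
      using coprime_power_repunit[of b "d - 1" h] by (simp add: coprime_commute del: repunit.simps)
  qed
  finally show ?thesis .
qed

lemma power_mult_Lcm_repunit_pos:
  "0 < (d - 1) ^ h * Lcm (insert (d * repunit (d - 1) (Suc h)) (repunit (d - 1) ` {2..h}))"
proof -
  have "\<forall>a\<in>insert (d * repunit (d - 1) (Suc h)) (repunit (d - 1) ` {2..h}). 0 < a"
    using two_le_d by (auto simp: repunit_pos simp del: repunit.simps)
  then have "Lcm (insert (d * repunit (d - 1) (Suc h)) (repunit (d - 1) ` {2..h})) \<noteq> 0"
    by (subst Lcm_0_iff) auto
  moreover have "(d - 1) ^ h \<noteq> 0"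
    using two_le_d by simp
  ultimately show ?thesis
    by (metis mult_is_0 neq0_conv)
qed

lemma multiples_in_Lambda_iff:
  assumes "3 \<le> d"
  shows "(\<forall>x\<in>ZV d h. (\<lambda>v. int n * x v) \<in> Lambda d h) \<longleftrightarrow>
    (d - 1) ^ h * Lcm (insert (d * repunit (d - 1) (Suc h)) (repunit (d - 1) ` {2..h})) dvd n"
proof -
  have "(\<forall>x\<in>ZV d h. (\<lambda>v. int n * x v) \<in> Lambda d h) \<longleftrightarrow>
      (\<forall>v\<in>tree_verts d h. \<forall>w\<in>tree_verts d h. of_nat n * G v w \<in> \<int>)"
    unfolding ZV_def Lambda_eq_row_lattice Ball_def mem_Collect_eq
    using finite_tree_verts G_inverse tree_Delta_sym
    by (rule row_lattice_multiples_iff_inverse_Ints[unfolded Ball_def])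
  also have "\<dots> \<longleftrightarrow> (\<forall>k\<le>h. of_nat n * rho k \<in> \<int>)"
    using assms by (rule G_Ints_iff_rho_Ints)
  finally show ?thesis
    unfolding rho_Ints_iff_dvd .
qed

end

theorem theorem2p3:
  fixes d h :: nat
  assumes "d \<ge> 3" and "h \<ge> 1"
  shows "sp_exponent d h =
    (d - 1) ^ h * Lcm ({d * theta d (h + 1)} \<union> theta d ` {2..h})"
proof -
  interpret tree_ball d h
    using assms(1) by unfold_locales simp
  let ?N = "(d - 1) ^ h * Lcm (insert (d * repunit (d - 1) (Suc h)) (repunit (d - 1) ` {2..h}))"
  have "sp_exponent d h dvd n \<longleftrightarrow> ?N dvd n" for n
    using sp_exponent_dvd_iff[OF power_mult_Lcm_repunit_pos] multiples_in_Lambda_iff[OF assms(1)]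
    by (metis dvd_refl)
  then have "sp_exponent d h = ?N"
    by (metis dvd_antisym dvd_refl)
  then show ?thesis
    using theta_eq_repunit[OF assms(1)] by simp
qed

end
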